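(* Let $\theta_1,\dots,\theta_{10}$ be real numbers such that $0<\theta_i<\theta_j<\theta_k<180$ for each of the triples $(i,j,k)\in\{(2,4,6),(1,5,9),(1,5,10),(1,5,7),(1,3,7),(1,4,7),(3,5,8),(2,8,9),(6,7,10)\}$, and write $s_{ij}=\sin(\theta_j-\theta_i)$. Suppose $$s_{89}\,s_{1,10}\,s_{24}\,s_{35}\,s_{67}+s_{46}\,s_{19}\,s_{7,10}\,s_{35}\,s_{28}-s_{46}\,s_{38}\,s_{7,10}\,s_{29}\,s_{15}<0 .$$ Then there is no $\mathbf r=(r_1,\dots,r_{10})\in\mathbb{R}^{10}$ satisfying simultaneously the nine strict inequalities $$r_is_{jk}-r_js_{ik}+r_ks_{ij}>0\quad\text{for }(i,j,k)\in\{(2,4,6),(1,5,9),(1,5,10),(1,5,7)\},$$ $$-r_is_{jk}+r_js_{ik}-r_ks_{ij}>0\quad\text{for }(i,j,k)\in\{(1,3,7),(1,4,7),(3,5,8),(2,8,9),(6,7,10)\}.$$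
   Context: Angles are in degrees. *)

theory Defs
  imports Complex_Main
begin

definition sind :: "real \<Rightarrow> real" where
  "sind x = sin (x * pi / 180)"

definition sdiff :: "(nat \<Rightarrow> real) \<Rightarrow> nat \<Rightarrow> nat \<Rightarrow> real" where
  "sdiff \<theta> i j = sind (\<theta> j - \<theta> i)"

end

theory Submission
  imports Defs
begin

text \<open>The nine inequalities are infeasible because of a Farkas-type certificate: a combination of
  the nine linear forms in \<open>r\<close>, with coefficients that are products of positive sines (and, for one
  form, the negated hypothesis quantity), vanishes identically. Writing \<open>s\<^sub>i\<^sub>j = S\<^sub>j C\<^sub>i - C\<^sub>j S\<^sub>i\<close>
  with \<open>C = cos\<close>, \<open>S = sin\<close>, each form is the determinant with rows \<open>(r\<^sub>l, C\<^sub>l, S\<^sub>l)\<close>, \<open>l = i, j, k\<close>,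
  and the vanishing is a polynomial identity in \<open>r, C, S\<close>; on the other hand every
  summand is positive under the hypotheses.\<close>

definition bracket :: "(nat \<Rightarrow> real) \<Rightarrow> (nat \<Rightarrow> nat \<Rightarrow> real) \<Rightarrow> nat \<Rightarrow> nat \<Rightarrow> nat \<Rightarrow> real" where
  "bracket r s i j k = r i * s j k - r j * s i k + r k * s i j"

lemma sdiff_eq_sin_cos:
  "sdiff \<theta> i j = sin (\<theta> j * pi / 180) * cos (\<theta> i * pi / 180) - cos (\<theta> j * pi / 180) * sin (\<theta> i * pi / 180)"
  unfolding sdiff_def sind_def by (simp add: left_diff_distrib diff_divide_distrib sin_diff)

lemma sdiff_pos:
  assumes "\<theta> i < \<theta> j" and "\<theta> j < \<theta> i + 180"
  shows "0 < sdiff \<theta> i j"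
proof -
  have "0 < (\<theta> j - \<theta> i) * pi / 180" using assms by simp
  moreover have "(\<theta> j - \<theta> i) * pi / 180 < pi" using assms by (simp add: divide_less_eq)
  ultimately show ?thesis unfolding sdiff_def sind_def by (rule sin_gt_zero)
qed

lemma bracket_certificate:
  fixes C S r :: "nat \<Rightarrow> real" and s :: "nat \<Rightarrow> nat \<Rightarrow> real"
  assumes "\<And>i j. s i j = S j * C i - C j * S i"
  defines "N \<equiv> s 8 9 * s 1 10 * s 2 4 * s 3 5 * s 6 7 + s 4 6 * s 1 9 * s 7 10 * s 3 5 * s 2 8
    - s 4 6 * s 3 8 * s 7 10 * s 2 9 * s 1 5"
  shows "(s 8 9 * s 3 5 * s 1 5 * s 7 10 * s 1 7) * bracket r s 2 4 6
   + (s 4 6 * s 2 8 * s 3 5 * s 7 10 * s 1 7) * bracket r s 1 5 9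
   + (s 2 4 * s 8 9 * s 3 5 * s 6 7 * s 1 7) * bracket r s 1 5 10
   + (- N) * bracket r s 1 5 7
   + (s 4 6 * s 2 9 * s 1 5 * s 7 10 * s 5 8) * (- bracket r s 1 3 7)
   + (s 2 6 * s 8 9 * s 3 5 * s 1 5 * s 7 10) * (- bracket r s 1 4 7)
   + (s 4 6 * s 2 9 * s 1 5 * s 7 10 * s 1 7) * (- bracket r s 3 5 8)
   + (s 4 6 * s 3 5 * s 1 5 * s 7 10 * s 1 7) * (- bracket r s 2 8 9)
   + (s 2 4 * s 8 9 * s 3 5 * s 1 5 * s 1 7) * (- bracket r s 6 7 10) = 0"
  unfolding bracket_def N_def assms by algebra

lemma bracket_signs_infeasible:
  fixes C S r :: "nat \<Rightarrow> real" and s :: "nat \<Rightarrow> nat \<Rightarrow> real"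
  assumes sin_cos: "\<And>i j. s i j = S j * C i - C j * S i"
    and pos: "s 8 9 > 0" "s 3 5 > 0" "s 1 5 > 0" "s 7 10 > 0" "s 1 7 > 0" "s 4 6 > 0"
      "s 2 6 > 0" "s 2 4 > 0" "s 2 9 > 0" "s 5 8 > 0" "s 2 8 > 0" "s 6 7 > 0"
    and neg: "s 8 9 * s 1 10 * s 2 4 * s 3 5 * s 6 7 + s 4 6 * s 1 9 * s 7 10 * s 3 5 * s 2 8
      - s 4 6 * s 3 8 * s 7 10 * s 2 9 * s 1 5 < 0"
    and brackets: "bracket r s 2 4 6 > 0" "bracket r s 1 5 9 > 0" "bracket r s 1 5 10 > 0"
      "bracket r s 1 5 7 > 0" "bracket r s 1 3 7 < 0" "bracket r s 1 4 7 < 0"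
      "bracket r s 3 5 8 < 0" "bracket r s 2 8 9 < 0" "bracket r s 6 7 10 < 0"
  shows False
proof -
  have "0 < (s 8 9 * s 3 5 * s 1 5 * s 7 10 * s 1 7) * bracket r s 2 4 6
   + (s 4 6 * s 2 8 * s 3 5 * s 7 10 * s 1 7) * bracket r s 1 5 9
   + (s 2 4 * s 8 9 * s 3 5 * s 6 7 * s 1 7) * bracket r s 1 5 10
   + (- (s 8 9 * s 1 10 * s 2 4 * s 3 5 * s 6 7 + s 4 6 * s 1 9 * s 7 10 * s 3 5 * s 2 8
         - s 4 6 * s 3 8 * s 7 10 * s 2 9 * s 1 5)) * bracket r s 1 5 7
   + (s 4 6 * s 2 9 * s 1 5 * s 7 10 * s 5 8) * (- bracket r s 1 3 7)
   + (s 2 6 * s 8 9 * s 3 5 * s 1 5 * s 7 10) * (- bracket r s 1 4 7)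
   + (s 4 6 * s 2 9 * s 1 5 * s 7 10 * s 1 7) * (- bracket r s 3 5 8)
   + (s 4 6 * s 3 5 * s 1 5 * s 7 10 * s 1 7) * (- bracket r s 2 8 9)
   + (s 2 4 * s 8 9 * s 3 5 * s 1 5 * s 1 7) * (- bracket r s 6 7 10)"
    using pos neg brackets by (intro add_pos_pos mult_pos_pos; simp)
  with bracket_certificate[of s S C r, OF sin_cos] show False by linarith
qed

theorem lemmal:
  fixes \<theta> :: "nat \<Rightarrow> real"
  assumes ord: "\<forall>(i,j,k) \<in> {(2,4,6),(1,5,9),(1,5,10),(1,5,7),(1,3,7),(1,4,7),(3,5,8),(2,8,9),(6,7,10)}.
                 0 < \<theta> i \<and> \<theta> i < \<theta> j \<and> \<theta> j < \<theta> k \<and> \<theta> k < 180"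
    and neg: "sdiff \<theta> 8 9 * sdiff \<theta> 1 10 * sdiff \<theta> 2 4 * sdiff \<theta> 3 5 * sdiff \<theta> 6 7
            + sdiff \<theta> 4 6 * sdiff \<theta> 1 9 * sdiff \<theta> 7 10 * sdiff \<theta> 3 5 * sdiff \<theta> 2 8
            - sdiff \<theta> 4 6 * sdiff \<theta> 3 8 * sdiff \<theta> 7 10 * sdiff \<theta> 2 9 * sdiff \<theta> 1 5 < 0"
  shows "\<not> (\<exists>r :: nat \<Rightarrow> real.
            (\<forall>(i,j,k) \<in> {(2,4,6),(1,5,9),(1,5,10),(1,5,7)}.
               r i * sdiff \<theta> j k - r j * sdiff \<theta> i k + r k * sdiff \<theta> i j > 0) \<and>
            (\<forall>(i,j,k) \<in> {(1,3,7),(1,4,7),(3,5,8),(2,8,9),(6,7,10)}.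
               - r i * sdiff \<theta> j k + r j * sdiff \<theta> i k - r k * sdiff \<theta> i j > 0))"
proof
  assume "\<exists>r :: nat \<Rightarrow> real.
            (\<forall>(i,j,k) \<in> {(2,4,6),(1,5,9),(1,5,10),(1,5,7)}.
               r i * sdiff \<theta> j k - r j * sdiff \<theta> i k + r k * sdiff \<theta> i j > 0) \<and>
            (\<forall>(i,j,k) \<in> {(1,3,7),(1,4,7),(3,5,8),(2,8,9),(6,7,10)}.
               - r i * sdiff \<theta> j k + r j * sdiff \<theta> i k - r k * sdiff \<theta> i j > 0)"
  then obtain r where
    "\<forall>(i,j,k) \<in> {(2,4,6),(1,5,9),(1,5,10),(1,5,7)}. bracket r (sdiff \<theta>) i j k > 0"
    "\<forall>(i,j,k) \<in> {(1,3,7),(1,4,7),(3,5,8),(2,8,9),(6,7,10)}. bracket r (sdiff \<theta>) i j k < 0"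
    unfolding bracket_def by auto
  then have brackets: "bracket r (sdiff \<theta>) 2 4 6 > 0" "bracket r (sdiff \<theta>) 1 5 9 > 0"
    "bracket r (sdiff \<theta>) 1 5 10 > 0" "bracket r (sdiff \<theta>) 1 5 7 > 0"
    "bracket r (sdiff \<theta>) 1 3 7 < 0" "bracket r (sdiff \<theta>) 1 4 7 < 0"
    "bracket r (sdiff \<theta>) 3 5 8 < 0" "bracket r (sdiff \<theta>) 2 8 9 < 0"
    "bracket r (sdiff \<theta>) 6 7 10 < 0"
    by auto
  have pos: "sdiff \<theta> 8 9 > 0" "sdiff \<theta> 3 5 > 0" "sdiff \<theta> 1 5 > 0" "sdiff \<theta> 7 10 > 0"
    "sdiff \<theta> 1 7 > 0" "sdiff \<theta> 4 6 > 0" "sdiff \<theta> 2 6 > 0" "sdiff \<theta> 2 4 > 0"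
    "sdiff \<theta> 2 9 > 0" "sdiff \<theta> 5 8 > 0" "sdiff \<theta> 2 8 > 0" "sdiff \<theta> 6 7 > 0"
    using ord by (auto intro!: sdiff_pos)
  show False
    by (rule bracket_signs_infeasible[OF sdiff_eq_sin_cos pos neg brackets])
qed

end
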